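(* Let $\mathcal B$ be a binomial class of reluctant functions with $|F(\emptyset,X)|=1$ for every finite $X$, and for integers $m,x\ge0$ let $p_m(x)=|F(S,X)|$ for any $S,X$ with $|S|=m$, $|X|=x$. Let $x$ be a positive integer, $X=\{1,\dots,x\}$, $n\ge0$, and let $z_0\le z_1\le\cdots\le z_{n-1}$ be integers in $\{1,\dots,x\}$. Then $$p_n(x)=\sum_{i=0}^{n-1}\binom ni\,p_{n-i}(x-z_i)\cdot ord(z_0,\dots,z_{i-1})\;+\;ord(z_0,\dots,z_{n-1}),$$ where $ord()=1$ for $i=0$.
   Context: For finite disjoint sets $S,X$, a reluctant function from $S$ to $X$ is a map $f:S\to S\cup X$ such that for every $s\in S$ there is a positive integer $k$ with $f^k(s)\in X$ (iterates of $f$); then $f^k(s)$ is the final image of $s$. A binomial class $\mathcal B$ assigns to each pair $(S,X)$ of finite disjoint sets a set $F(S,X)$ of reluctant functions from $S$ to $X$ such that: (i) $F$ is compatible with bijections (bijections $S\to S'$, $X\to X'$ transport $F(S,X)$ onto $F(S',X')$); (ii) for disjoint finite $X,Y$ (disjoint from $S$), the map sending a reluctant function $f$ from $S$ to $X\cup Y$ to the pair $(f_A,f_{S\setminus A})$, where $A$ is the set of $s\in S$ whose final image lies in $X$ and $f_A,f_{S\setminus A}$ are the restrictions, is a bijection from $F(S,X\cup Y)$ onto $\bigsqcup_{A\subseteq S}F(A,X)\times F(S\setminus A,Y)$. Order statistics: for $S=\{s_0,\dots,s_{m-1}\}$, $X=\{1,\dots,x\}$ and $f\in F(S,X)$, let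 $x_i$ be the final image of $s_i$ and $x_{(0)}\le\cdots\le x_{(m-1)}$ the nondecreasing rearrangement of $(x_0,\dots,x_{m-1})$. For integers $z_0\le\cdots\le z_{m-1}$ in $X$, $ord(z_0,\dots,z_{m-1})$ is the number of $f\in F(S,X)$ with $x_{(j)}\le z_j$ for all $0\le j\le m-1$ (this depends only on $m$ and the $z_j$). *)

theory Defs
  imports "HOL-Library.FuncSet"
begin

text \<open>Finite sets are modelled as finite sets of natural numbers. A function from S to
S \<union> X is an extensional function (undefined outside S).\<close>

definition reluctant :: "nat set \<Rightarrow> nat set \<Rightarrow> (nat \<Rightarrow> nat) \<Rightarrow> bool" where
  "reluctant S X f \<longleftrightarrow> f \<in> S \<rightarrow>\<^sub>E (S \<union> X) \<and> (\<forall>s\<in>S. \<exists>k>0. (f ^^ k) s \<in> X)"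

definition final_image :: "(nat \<Rightarrow> nat) \<Rightarrow> nat set \<Rightarrow> nat \<Rightarrow> nat" where
  "final_image f X s = (f ^^ (LEAST k. 0 < k \<and> (f ^^ k) s \<in> X)) s"

definition transport ::
  "(nat \<Rightarrow> nat) \<Rightarrow> (nat \<Rightarrow> nat) \<Rightarrow> nat set \<Rightarrow> nat set \<Rightarrow> (nat \<Rightarrow> nat) \<Rightarrow> (nat \<Rightarrow> nat)" where
  "transport \<sigma> \<tau> S S' f =
     restrict (\<lambda>s'. let t = f (inv_into S \<sigma> s') in if t \<in> S then \<sigma> t else \<tau> t) S'"

definition binomial_class :: "(nat set \<Rightarrow> nat set \<Rightarrow> (nat \<Rightarrow> nat) set) \<Rightarrow> bool" where
  "binomial_class F \<longleftrightarrow>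
     (\<forall>S X. finite S \<and> finite X \<and> S \<inter> X = {} \<longrightarrow> F S X \<subseteq> {f. reluctant S X f}) \<and>
     (\<forall>S X S' X' \<sigma> \<tau>. finite S \<and> finite X \<and> S \<inter> X = {} \<and> finite S' \<and> finite X' \<and> S' \<inter> X' = {}
        \<and> bij_betw \<sigma> S S' \<and> bij_betw \<tau> X X' \<longrightarrow>
        F S' X' = transport \<sigma> \<tau> S S' ` F S X) \<and>
     (\<forall>S X Y. finite S \<and> finite X \<and> finite Y \<and> S \<inter> X = {} \<and> S \<inter> Y = {} \<and> X \<inter> Y = {} \<longrightarrow>
        bij_betw
          (\<lambda>f. let A = {s\<in>S. final_image f (X \<union> Y) s \<in> X}
               in (A, restrict f A, restrict f (S - A)))
          (F S (X \<union> Y))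
          (SIGMA A:Pow S. F A X \<times> F (S - A) Y))"

text \<open>Canonical representatives: X = {1..x}, S = {x+1..x+m} with s_i = x+1+i.\<close>

definition p :: "(nat set \<Rightarrow> nat set \<Rightarrow> (nat \<Rightarrow> nat) set) \<Rightarrow> nat \<Rightarrow> nat \<Rightarrow> nat" where
  "p F m x = card (F {x+1..x+m} {1..x})"

definition ord_stat :: "(nat set \<Rightarrow> nat set \<Rightarrow> (nat \<Rightarrow> nat) set) \<Rightarrow> nat \<Rightarrow> nat list \<Rightarrow> nat" where
  "ord_stat F x zs = card {f \<in> F {x+1..x+length zs} {1..x}.
      \<forall>j<length zs. sort (map (\<lambda>i. final_image f {1..x} (x+1+i)) [0..<length zs]) ! j \<le> zs ! j}"

end

theory Submission
  imports Defs
begin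

text \<open>Split F({x+1..x+n}, {1..x}) according to the first index i at which the bound
  x_(i) \<le> z_i fails; the functions for which no bound fails are counted by ord(z_0, \<dots>, z_(n-1)).
  If the bound first fails at i, exactly i points have final image \<le> z_i. Applying the binomial
  property to {1..x} = {1..z_i} \<union> {z_i+1..x}, such a function is the same as a choice A of these
  i points, a function in F(A, {1..z_i}) meeting the first i bounds, and an arbitrary function in
  F(S - A, {z_i+1..x}). This gives binomial(n, i) \<cdot> ord(z_0, \<dots>, z_(i-1)) \<cdot> p_(n-i)(x - z_i),
  where the middle factor comes from the same decomposition with n = i and |F(\<emptyset>, \<cdot>)| = 1.\<close>

lemma binomial_class_reluctant:
  assumes "binomial_class F" "finite S" "finite X" "S \<inter> X = {}" "f \<in> F S X"
  shows "reluctant S X f"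
  using assms unfolding binomial_class_def by auto

lemma binomial_class_transport:
  assumes "binomial_class F" "finite S" "finite X" "S \<inter> X = {}" "finite S'" "finite X'" "S' \<inter> X' = {}"
    "bij_betw \<sigma> S S'" "bij_betw \<tau> X X'"
  shows "F S' X' = transport \<sigma> \<tau> S S' ` F S X"
  using assms unfolding binomial_class_def by simp

lemma binomial_class_split:
  assumes "binomial_class F" "finite S" "finite X" "finite Y" "S \<inter> X = {}" "S \<inter> Y = {}" "X \<inter> Y = {}"
  shows "bij_betw
          (\<lambda>f. let A = {s\<in>S. final_image f (X \<union> Y) s \<in> X}
               in (A, restrict f A, restrict f (S - A)))
          (F S (X \<union> Y))
          (SIGMA A:Pow S. F A X \<times> F (S - A) Y)"
  using assms unfolding binomial_class_def by simp

lemma funpow_simulation: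
  fixes g h \<phi> :: "nat \<Rightarrow> nat"
  assumes g: "g \<in> A \<rightarrow>\<^sub>E A \<union> X" and s: "s \<in> A"
    and before_X: "\<And>k. 0 < k \<Longrightarrow> k < K \<Longrightarrow> (g^^k) s \<notin> X"
    and step: "\<And>u. u \<in> A \<Longrightarrow> g u \<in> A \<Longrightarrow> h (\<phi> u) = \<phi> (g u)"
    and "k < K"
  shows "(g^^k) s \<in> A \<and> (h^^k) (\<phi> s) = \<phi> ((g^^k) s)"
  using \<open>k < K\<close>
proof (induction k)
  case 0 then show ?case using s by simp
next
  case (Suc k)
  then have IH: "(g^^k) s \<in> A" "(h^^k) (\<phi> s) = \<phi> ((g^^k) s)" by auto
  have "g ((g^^k) s) \<in> A \<union> X" using g IH(1) by (auto simp: PiE_iff)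
  moreover have "(g^^Suc k) s \<notin> X" using before_X Suc.prems by blast
  ultimately have "(g^^Suc k) s \<in> A" by auto
  then show ?case using step[OF IH(1)] IH by simp
qed

lemma final_image_simulation:
  fixes g h \<phi> \<psi> :: "nat \<Rightarrow> nat"
  assumes rel: "reluctant A X g" and s: "s \<in> A"
    and B: "\<phi> ` A \<subseteq> B" and BZ: "B \<inter> Z = {}" and XZ: "\<psi> ` X \<subseteq> Z"
    and stepA: "\<And>u. u \<in> A \<Longrightarrow> g u \<in> A \<Longrightarrow> h (\<phi> u) = \<phi> (g u)"
    and stepX: "\<And>u. u \<in> A \<Longrightarrow> g u \<in> X \<Longrightarrow> h (\<phi> u) = \<psi> (g u)"
  shows "final_image h Z (\<phi> s) = \<psi> (final_image g X s) \<and> final_image g X s \<in> X"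
proof -
  define k0 where "k0 = (LEAST k. 0 < k \<and> (g^^k) s \<in> X)"
  have "\<exists>k. 0 < k \<and> (g^^k) s \<in> X" using rel s unfolding reluctant_def by blast
  then have k0: "0 < k0 \<and> (g^^k0) s \<in> X" unfolding k0_def by (rule LeastI_ex)
  have before_X: "\<And>k. 0 < k \<Longrightarrow> k < k0 \<Longrightarrow> (g^^k) s \<notin> X"
    using not_less_Least k0_def by blast
  have g: "g \<in> A \<rightarrow>\<^sub>E A \<union> X" using rel unfolding reluctant_def by blast
  have orbit: "(g^^k) s \<in> A \<and> (h^^k) (\<phi> s) = \<phi> ((g^^k) s)" if "k < k0" for k
    by (rule funpow_simulation[where h=h and \<phi>=\<phi>, OF g s before_X stepA that])
  obtain k1 where k1: "k0 = Suc k1" using k0 by (cases k0) auto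
  have exit: "(h^^k0) (\<phi> s) = \<psi> ((g^^k0) s)"
    using orbit[of k1] k1 stepX k0 by simp
  have "(LEAST k. 0 < k \<and> (h^^k) (\<phi> s) \<in> Z) = k0"
  proof (rule Least_equality)
    show "0 < k0 \<and> (h^^k0) (\<phi> s) \<in> Z" using k0 exit XZ by auto
  next
    fix y assume y: "0 < y \<and> (h^^y) (\<phi> s) \<in> Z"
    show "k0 \<le> y"
    proof (rule ccontr)
      assume "\<not> k0 \<le> y"
      then have "(h^^y) (\<phi> s) \<in> B" using orbit[of y] B by auto
      then show False using y BZ by auto
    qed
  qed
  then show ?thesis unfolding final_image_def k0_def[symmetric] using exit k0 by simp
qed

lemma final_image_in:
  assumes "reluctant S X f" "S \<inter> X = {}" "s \<in> S"
  shows "final_image f X s \<in> X"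
  using final_image_simulation[OF assms(1,3), where h=f and \<phi>=id and \<psi>=id and B=S and Z=X] assms(2)
  by auto

lemma finite_F:
  assumes "binomial_class F" "finite S" "finite X" "S \<inter> X = {}"
  shows "finite (F S X)"
proof (rule finite_subset)
  show "F S X \<subseteq> S \<rightarrow>\<^sub>E (S \<union> X)"
    using binomial_class_reluctant[OF assms] unfolding reluctant_def by blast
  show "finite (S \<rightarrow>\<^sub>E (S \<union> X))" using assms by (intro finite_PiE) auto
qed

lemma card_F_le_of_same_card:
  assumes "binomial_class F" "finite S" "finite X" "S \<inter> X = {}" "finite S'" "finite X'" "S' \<inter> X' = {}"
    "card S = card S'" "card X = card X'"
  shows "card (F S' X') \<le> card (F S X)"
proof -
  obtain \<sigma> where \<sigma>: "bij_betw \<sigma> S S'" using finite_same_card_bij[OF assms(2,5,8)] by blast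
  obtain \<tau> where \<tau>: "bij_betw \<tau> X X'" using finite_same_card_bij[OF assms(3,6,9)] by blast
  show ?thesis
    unfolding binomial_class_transport[OF assms(1-7) \<sigma> \<tau>]
    by (rule card_image_le[OF finite_F[OF assms(1-4)]])
qed

lemma card_F_eq_p:
  assumes "binomial_class F" "finite S" "finite X" "S \<inter> X = {}"
  shows "card (F S X) = p F (card S) (card X)"
proof -
  let ?S' = "{card X+1..card X+card S}" and ?X' = "{1..card X}"
  have "card (F ?S' ?X') \<le> card (F S X)"
    by (rule card_F_le_of_same_card[OF assms]) auto
  moreover have "card (F S X) \<le> card (F ?S' ?X')"
    by (rule card_F_le_of_same_card[OF assms(1)]) (use assms in auto)
  ultimately show ?thesis unfolding p_def by simp
qed

lemma final_image_transport:
  assumes rel: "reluctant A X g" and disj: "A \<inter> X = {}" "A' \<inter> X = {}"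
    and \<sigma>: "bij_betw \<sigma> A A'" and s: "s \<in> A"
  shows "final_image (transport \<sigma> id A A' g) X (\<sigma> s) = final_image g X s"
proof -
  have step: "transport \<sigma> id A A' g (\<sigma> u) = (if g u \<in> A then \<sigma> (g u) else g u)" if "u \<in> A" for u
    using bij_betw_apply[OF \<sigma> that] bij_betw_inv_into_left[OF \<sigma> that]
    unfolding transport_def by simp
  have "final_image (transport \<sigma> id A A' g) X (\<sigma> s) = id (final_image g X s)"
  proof (rule conjunct1[OF final_image_simulation[OF rel s]])
    show "\<sigma> ` A \<subseteq> A'" using \<sigma> bij_betw_imp_surj_on by blast
  qed (use disj step in auto)
  then show ?thesis by simp
qed

definition final_le :: "(nat \<Rightarrow> nat) \<Rightarrow> nat set \<Rightarrow> nat set \<Rightarrow> nat \<Rightarrow> nat set" where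
  "final_le f S X c = {s\<in>S. final_image f X s \<le> c}"

text \<open>The order statistic x_(j) is \<le> z_j iff at least j + 1 of the final images are \<le> z_j, so
  ord(z_0, \<dots>, z_(i-1)) counts ord_set F S X zs i (see ord_stat_eq_card_ord_set).\<close>

definition ord_set ::
  "(nat set \<Rightarrow> nat set \<Rightarrow> (nat \<Rightarrow> nat) set) \<Rightarrow> nat set \<Rightarrow> nat set \<Rightarrow> nat list \<Rightarrow> nat \<Rightarrow> (nat \<Rightarrow> nat) set"
where
  "ord_set F S X zs i = {f\<in>F S X. \<forall>j<i. j < card (final_le f S X (zs!j))}"

lemma finite_ord_set:
  assumes "binomial_class F" "finite S" "finite X" "S \<inter> X = {}"
  shows "finite (ord_set F S X zs i)"
  using finite_F[OF assms] unfolding ord_set_def by simp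

lemma final_le_transport:
  assumes "reluctant A X g" "A \<inter> X = {}" "A' \<inter> X = {}" and \<sigma>: "bij_betw \<sigma> A A'"
  shows "final_le (transport \<sigma> id A A' g) A' X c = \<sigma> ` final_le g A X c"
proof -
  have "A' = \<sigma> ` A" using \<sigma> by (simp add: bij_betw_def)
  then show ?thesis
    unfolding final_le_def using final_image_transport[OF assms] by auto
qed

lemma card_ord_set_le_of_same_card:
  assumes bc: "binomial_class F" and fin: "finite A" "finite X" "finite A'"
    and disj: "A \<inter> X = {}" "A' \<inter> X = {}" and c: "card A = card A'"
  shows "card (ord_set F A' X zs i) \<le> card (ord_set F A X zs i)"
proof -
  obtain \<sigma> where \<sigma>: "bij_betw \<sigma> A A'" using finite_same_card_bij[OF fin(1,3) c] by blast
  define T where "T = transport \<sigma> id A A'"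
  have card_final_le: "card (final_le (T g) A' X c) = card (final_le g A X c)" if "g \<in> F A X" for g c
    unfolding T_def final_le_transport[OF binomial_class_reluctant[OF bc fin(1,2) disj(1) that] disj \<sigma>]
    by (rule card_image, rule inj_on_subset[OF bij_betw_imp_inj_on[OF \<sigma>]]) (simp add: final_le_def)
  have "F A' X = T ` F A X"
    unfolding T_def using binomial_class_transport[OF bc fin(1,2) disj(1) fin(3,2) disj(2) \<sigma>] by simp
  then have "ord_set F A' X zs i = T ` ord_set F A X zs i"
    unfolding ord_set_def using card_final_le by auto
  moreover have "finite (ord_set F A X zs i)" by (rule finite_ord_set[OF bc fin(1,2) disj(1)])
  ultimately show ?thesis by (simp add: card_image_le)
qed

lemma card_ord_set_eq_of_same_card:
  assumes "binomial_class F" "finite A" "finite X" "finite A'" "A \<inter> X = {}" "A' \<inter> X = {}"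
    "card A = card A'"
  shows "card (ord_set F A' X zs i) = card (ord_set F A X zs i)"
  using card_ord_set_le_of_same_card[OF assms]
    card_ord_set_le_of_same_card[OF assms(1,4,3,2,6,5) assms(7)[symmetric]] by (rule le_antisym)

lemma sorted_nth_le_iff_less_length_filter:
  "sorted ys \<Longrightarrow> j < length ys \<Longrightarrow> ys!j \<le> (c::nat) \<longleftrightarrow> j < length (filter (\<lambda>y. y \<le> c) ys)"
proof (induction ys arbitrary: j)
  case Nil then show ?case by simp
next
  case (Cons y ys)
  show ?case
  proof (cases "y \<le> c")
    case True
    then show ?thesis using Cons by (cases j) auto
  next
    case False
    have "filter (\<lambda>y. y \<le> c) ys = []" using Cons.prems(1) False by (auto simp: filter_empty_conv)
    moreover have "y \<le> (y#ys)!j" using Cons.prems by (cases j) auto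
    ultimately show ?thesis using False by simp
  qed
qed

lemma sort_le_pointwise_iff:
  "(\<forall>j<m. sort (map (g::nat \<Rightarrow> nat) [0..<m]) ! j \<le> zs ! j) \<longleftrightarrow>
   (\<forall>j<m. j < card {i. i < m \<and> g i \<le> zs ! j})"
proof -
  have "sort (map g [0..<m]) ! j \<le> c \<longleftrightarrow> j < card {i. i < m \<and> g i \<le> c}" if "j < m" for j c
  proof -
    have "sort (map g [0..<m]) ! j \<le> c \<longleftrightarrow> j < length (filter (\<lambda>y. y \<le> c) (sort (map g [0..<m])))"
      by (rule sorted_nth_le_iff_less_length_filter) (use that in auto)
    also have "length (filter (\<lambda>y. y \<le> c) (sort (map g [0..<m]))) = card {i. i < m \<and> g i \<le> c}"
      by (simp add: filter_sort length_filter_conv_card cong: conj_cong)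
    finally show ?thesis .
  qed
  then show ?thesis by blast
qed

lemma card_shift_interval: "card {i. i < m \<and> P (x+1+i)} = card {s\<in>{x+1..x+(m::nat)}. P s}"
proof -
  have "{s\<in>{x+1..x+m}. P s} = (\<lambda>i. x+1+i) ` {i. i < m \<and> P (x+1+i)}"
  proof (intro equalityI subsetI)
    fix s assume "s \<in> {s\<in>{x+1..x+m}. P s}"
    then show "s \<in> (\<lambda>i. x+1+i) ` {i. i < m \<and> P (x+1+i)}"
      by (auto intro!: image_eqI[where x="s - (x+1)"])
  qed auto
  then show ?thesis by (simp add: card_image inj_on_def)
qed

lemma ord_stat_eq_card_ord_set:
  "ord_stat F x zs = card (ord_set F {x+1..x+length zs} {1..x} zs (length zs))"
proof -
  have shift: "card {i. i < m \<and> final_image f X (x+1+i) \<le> c}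
      = card {s\<in>{x+1..x+m}. final_image f X s \<le> c}" for f X c m
    by (rule card_shift_interval)
  show ?thesis unfolding ord_stat_def ord_set_def final_le_def sort_le_pointwise_iff shift ..
qed

lemma ord_set_take: "ord_set F S X (take i zs) i = ord_set F S X zs i"
  unfolding ord_set_def by simp

lemma card_final_le_mono: "finite S \<Longrightarrow> c \<le> d \<Longrightarrow> card (final_le f S X c) \<le> card (final_le f S X d)"
  unfolding final_le_def by (rule card_mono) auto

lemma ord_set_card_final_le_ge:
  assumes "finite S" "f \<in> ord_set F S X zs i" "\<forall>j<i. zs!j \<le> z"
  shows "i \<le> card (final_le f S X z)"
proof (cases i)
  case (Suc k)
  then have "k < card (final_le f S X (zs!k))" using assms(2) unfolding ord_set_def by simp
  also have "\<dots> \<le> card (final_le f S X z)" using assms(1,3) Suc by (simp add: card_final_le_mono)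
  finally show ?thesis using Suc by simp
qed simp

lemma binomial_class_split_at:
  assumes bc: "binomial_class F" and S: "finite S" "S \<inter> {1..x} = {}" and z: "z \<le> x"
  shows "bij_betw (\<lambda>f. let A = final_le f S {1..x} z in (A, restrict f A, restrict f (S - A)))
           (F S {1..x}) (SIGMA A:Pow S. F A {1..z} \<times> F (S - A) {z+1..x})"
proof -
  have U: "{1..z} \<union> {z+1..x} = {1..x}" using z by auto
  have "bij_betw (\<lambda>f. let A = {s\<in>S. final_image f ({1..z} \<union> {z+1..x}) s \<in> {1..z}}
                        in (A, restrict f A, restrict f (S - A)))
           (F S ({1..z} \<union> {z+1..x})) (SIGMA A:Pow S. F A {1..z} \<times> F (S - A) {z+1..x})"
    by (rule binomial_class_split[OF bc S(1)]) (use S(2) z in auto)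
  then have split: "bij_betw (\<lambda>f. let A = {s\<in>S. final_image f {1..x} s \<in> {1..z}}
                                   in (A, restrict f A, restrict f (S - A)))
           (F S {1..x}) (SIGMA A:Pow S. F A {1..z} \<times> F (S - A) {z+1..x})"
    unfolding U .
  have "{s\<in>S. final_image f {1..x} s \<in> {1..z}} = final_le f S {1..x} z" if "f \<in> F S {1..x}" for f
    using final_image_in[OF binomial_class_reluctant[OF bc S(1) _ S(2) that] S(2)]
    unfolding final_le_def by auto
  then show ?thesis by (intro iffD1[OF bij_betw_cong split]) simp
qed

lemma restrict_final_le_in_F:
  assumes "binomial_class F" "finite S" "S \<inter> {1..x} = {}" "z \<le> x" "f \<in> F S {1..x}"
  shows "restrict f (final_le f S {1..x} z) \<in> F (final_le f S {1..x} z) {1..z}"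
  using bij_betw_apply[OF binomial_class_split_at[OF assms(1-4)] assms(5)] by (simp add: Let_def)

lemma final_le_restrict:
  assumes bc: "binomial_class F" and S: "finite S" "S \<inter> {1..x} = {}" and z: "z \<le> x"
    and f: "f \<in> F S {1..x}" and c: "c \<le> z"
  defines "A \<equiv> final_le f S {1..x} z"
  shows "final_le f S {1..x} c = final_le (restrict f A) A {1..z} c"
proof -
  have AS: "A \<subseteq> S" unfolding A_def final_le_def by blast
  have rel: "reluctant A {1..z} (restrict f A)"
    using restrict_final_le_in_F[OF bc S z f] AS S z finite_subset unfolding A_def[symmetric]
    by (intro binomial_class_reluctant[OF bc]) auto
  have "final_image f {1..x} s = final_image (restrict f A) {1..z} s" if "s \<in> A" for s
    using final_image_simulation[OF rel that, where \<phi>=id and \<psi>=id and h=f and B=A and Z="{1..x}"]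
      AS S(2) z by auto
  then show ?thesis using c AS unfolding A_def final_le_def by auto
qed

lemma ord_set_iff_restrict:
  assumes bc: "binomial_class F" and S: "finite S" "S \<inter> {1..x} = {}" and z: "z \<le> x"
    and f: "f \<in> F S {1..x}" and zs: "\<forall>j<i. zs!j \<le> z"
  defines "A \<equiv> final_le f S {1..x} z"
  shows "f \<in> ord_set F S {1..x} zs i \<longleftrightarrow> restrict f A \<in> ord_set F A {1..z} zs i"
proof -
  have "final_le f S {1..x} (zs!j) = final_le (restrict f A) A {1..z} (zs!j)" if "j < i" for j
    unfolding A_def by (rule final_le_restrict[OF bc S z f]) (use zs that in simp)
  then show ?thesis
    using f restrict_final_le_in_F[OF bc S z f] unfolding ord_set_def A_def[symmetric] by auto
qed

lemma card_Sigma_ord_set: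
  assumes bc: "binomial_class F" and S: "finite S" "S \<inter> {1..x} = {}" and z: "z \<le> x"
    and T: "finite T" "T \<inter> {1..z} = {}" "card T = i"
  shows "card (SIGMA A:{A. A \<subseteq> S \<and> card A = i}. ord_set F A {1..z} zs i \<times> F (S - A) {z+1..x})
       = (card S choose i) * card (ord_set F T {1..z} zs i) * p F (card S - i) (x - z)"
proof -
  define \<A> where "\<A> = {A. A \<subseteq> S \<and> card A = i}"
  have "card (ord_set F A {1..z} zs i \<times> F (S - A) {z+1..x})
      = card (ord_set F T {1..z} zs i) * p F (card S - i) (x - z)" if "A \<in> \<A>" for A
  proof -
    have A: "A \<subseteq> S" "card A = i" "finite A" "A \<inter> {1..z} = {}"
      using that S z finite_subset unfolding \<A>_def by auto
    have "(S - A) \<inter> {z+1..x} = {}" using S by auto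
    then have "card (F (S - A) {z+1..x}) = p F (card S - i) (x - z)"
      using card_F_eq_p[OF bc, of "S - A" "{z+1..x}"] S(1) A by (simp add: card_Diff_subset)
    moreover have "card (ord_set F A {1..z} zs i) = card (ord_set F T {1..z} zs i)"
      by (rule card_ord_set_eq_of_same_card[OF bc T(1) _ A(3) T(2) A(4)]) (use A T in auto)
    ultimately show ?thesis by (simp add: card_cartesian_product)
  qed
  moreover have "finite (ord_set F A {1..z} zs i \<times> F (S - A) {z+1..x})" if "A \<in> \<A>" for A
  proof -
    have A: "finite A" "A \<inter> {1..z} = {}" using that S z finite_subset unfolding \<A>_def by auto
    have "finite (ord_set F A {1..z} zs i)" by (rule finite_ord_set[OF bc A(1) _ A(2)]) simp
    moreover have "finite (F (S - A) {z+1..x})" by (rule finite_F[OF bc]) (use S in auto)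
    ultimately show ?thesis by simp
  qed
  moreover have "finite \<A>" "card \<A> = card S choose i"
    unfolding \<A>_def using S(1) n_subsets[OF S(1)] by simp_all
  ultimately show ?thesis unfolding \<A>_def[symmetric] by (simp add: card_SigmaI)
qed

lemma card_ord_set_split_at:
  assumes bc: "binomial_class F" and S: "finite S" "S \<inter> {1..x} = {}" and z: "z \<le> x"
    and zs: "\<forall>j<i. zs!j \<le> z" and T: "finite T" "T \<inter> {1..z} = {}" "card T = i"
  shows "card {f\<in>ord_set F S {1..x} zs i. card (final_le f S {1..x} z) = i}
       = (card S choose i) * card (ord_set F T {1..z} zs i) * p F (card S - i) (x - z)"
proof -
  define \<Phi> where "\<Phi> = (\<lambda>f. let A = final_le f S {1..x} z in (A, restrict f A, restrict f (S - A)))"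
  define H where "H = (SIGMA A:Pow S. F A {1..z} \<times> F (S - A) {z+1..x})"
  define Sel where
    "Sel = (SIGMA A:{A. A \<subseteq> S \<and> card A = i}. ord_set F A {1..z} zs i \<times> F (S - A) {z+1..x})"
  have bij: "bij_betw \<Phi> (F S {1..x}) H"
    unfolding \<Phi>_def H_def by (rule binomial_class_split_at[OF bc S z])
  have Sel_iff: "\<Phi> f \<in> Sel \<longleftrightarrow> f \<in> ord_set F S {1..x} zs i \<and> card (final_le f S {1..x} z) = i"
    if f: "f \<in> F S {1..x}" for f
  proof -
    define A where "A = final_le f S {1..x} z"
    have "\<Phi> f \<in> H" by (rule bij_betw_apply[OF bij f])
    then have "A \<in> Pow S \<and> restrict f (S - A) \<in> F (S - A) {z+1..x}"
      unfolding \<Phi>_def H_def Let_def A_def[symmetric]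
      by (simp only: mem_Sigma_iff mem_Times_iff fst_conv snd_conv)
    then have "\<Phi> f \<in> Sel \<longleftrightarrow> card A = i \<and> restrict f A \<in> ord_set F A {1..z} zs i"
      unfolding \<Phi>_def Sel_def A_def[symmetric] Let_def by simp
    also have "\<dots> \<longleftrightarrow> card A = i \<and> f \<in> ord_set F S {1..x} zs i"
      unfolding A_def ord_set_iff_restrict[OF bc S z f zs] ..
    finally show ?thesis unfolding A_def by blast
  qed
  have "{f\<in>ord_set F S {1..x} zs i. card (final_le f S {1..x} z) = i} = {f\<in>F S {1..x}. \<Phi> f \<in> Sel}"
    using Sel_iff unfolding ord_set_def by auto
  then have "card {f\<in>ord_set F S {1..x} zs i. card (final_le f S {1..x} z) = i} = card {t\<in>H. t \<in> Sel}"
    using bij_betw_same_card[OF bij_betw_Collect[OF bij, of "\<lambda>t. t \<in> Sel"]] by simp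
  also have "{t\<in>H. t \<in> Sel} = Sel"
  proof -
    have "Sel \<subseteq> H" unfolding H_def Sel_def ord_set_def by auto
    then show ?thesis by blast
  qed
  also have "card Sel = (card S choose i) * card (ord_set F T {1..z} zs i) * p F (card S - i) (x - z)"
    unfolding Sel_def by (rule card_Sigma_ord_set[OF bc S z T])
  finally show ?thesis .
qed

lemma ord_stat_take:
  assumes bc: "binomial_class F" and one: "\<forall>X. finite X \<longrightarrow> card (F {} X) = 1"
    and z: "z \<le> x" and i: "i \<le> length zs" and zs: "\<forall>j<i. zs!j \<le> z"
  shows "ord_stat F x (take i zs) = card (ord_set F {x+1..x+i} {1..z} zs i)"
proof -
  let ?S = "{x+1..x+i}"
  have "ord_stat F x (take i zs) = card (ord_set F ?S {1..x} zs i)"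
    using i by (simp add: ord_stat_eq_card_ord_set ord_set_take min_absorb2)
  also have "ord_set F ?S {1..x} zs i = {f\<in>ord_set F ?S {1..x} zs i. card (final_le f ?S {1..x} z) = i}"
  proof -
    have "card (final_le f ?S {1..x} z) \<le> card ?S" for f
      by (rule card_mono) (auto simp: final_le_def)
    then show ?thesis using ord_set_card_final_le_ge[of ?S _ F "{1..x}" zs i z] zs by force
  qed
  also have "card \<dots> = (card ?S choose i) * card (ord_set F ?S {1..z} zs i) * p F (card ?S - i) (x - z)"
    by (rule card_ord_set_split_at[OF bc _ _ z zs]) (use z in auto)
  also have "p F (card ?S - i) (x - z) = 1"
    using one unfolding p_def by simp
  finally show ?thesis by simp
qed

lemma card_first_failure:
  fixes n :: nat
  assumes "finite G"
  shows "card G = card {f\<in>G. \<forall>j<n. Q j f} + (\<Sum>i<n. card {f\<in>G. (\<forall>j<i. Q j f) \<and> \<not> Q i f})"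
proof (induction n)
  case 0 then show ?case by simp
next
  case (Suc n)
  have "{f\<in>G. \<forall>j<n. Q j f} = {f\<in>G. \<forall>j<Suc n. Q j f} \<union> {f\<in>G. (\<forall>j<n. Q j f) \<and> \<not> Q n f}"
    using less_Suc_eq by auto
  then have "card {f\<in>G. \<forall>j<n. Q j f}
      = card {f\<in>G. \<forall>j<Suc n. Q j f} + card {f\<in>G. (\<forall>j<n. Q j f) \<and> \<not> Q n f}"
    using assms by (simp add: card_Un_disjoint disjoint_iff)
  then show ?case using Suc.IH by simp
qed

lemma card_first_failure_eq:
  assumes bc: "binomial_class F" and one: "\<forall>X. finite X \<longrightarrow> card (F {} X) = 1"
    and len: "length zs = n" and sorted: "sorted zs" and range: "\<forall>z\<in>set zs. 1 \<le> z \<and> z \<le> x"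
    and i: "i < n"
  defines "S \<equiv> {x+1..x+n}"
  shows "card {f\<in>F S {1..x}. (\<forall>j<i. j < card (final_le f S {1..x} (zs!j)))
                              \<and> \<not> i < card (final_le f S {1..x} (zs!i))}
       = (n choose i) * p F (n - i) (x - zs!i) * ord_stat F x (take i zs)"
proof -
  have z: "zs!i \<le> x" using range i len nth_mem by auto
  have zs: "\<forall>j<i. zs!j \<le> zs!i" using sorted_nth_mono[OF sorted] i len by simp
  have S: "finite S" "S \<inter> {1..x} = {}" "card S = n" unfolding S_def by auto
  have "i \<le> card (final_le f S {1..x} (zs!i))" if "f \<in> ord_set F S {1..x} zs i" for f
    by (rule ord_set_card_final_le_ge[OF S(1) that zs])
  then have "{f\<in>F S {1..x}. (\<forall>j<i. j < card (final_le f S {1..x} (zs!j)))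
                              \<and> \<not> i < card (final_le f S {1..x} (zs!i))}
      = {f\<in>ord_set F S {1..x} zs i. card (final_le f S {1..x} (zs!i)) = i}"
    unfolding ord_set_def by (auto intro: le_antisym)
  also have "card \<dots> = (card S choose i) * card (ord_set F {x+1..x+i} {1..zs!i} zs i)
                       * p F (card S - i) (x - zs!i)"
    by (rule card_ord_set_split_at[OF bc S(1,2) z zs]) (use z in auto)
  also have "card (ord_set F {x+1..x+i} {1..zs!i} zs i) = ord_stat F x (take i zs)"
    by (rule ord_stat_take[OF bc one z _ zs, symmetric]) (use i len in simp)
  finally show ?thesis unfolding S(3) by (simp only: ac_simps)
qed

theorem mainTheorem17:
  fixes F :: "nat set \<Rightarrow> nat set \<Rightarrow> (nat \<Rightarrow> nat) set"
    and x n :: nat and zs :: "nat list"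
  assumes "binomial_class F"
    and "\<forall>X. finite X \<longrightarrow> card (F {} X) = 1"
    and "0 < x"
    and "length zs = n"
    and "sorted zs"
    and "\<forall>z\<in>set zs. 1 \<le> z \<and> z \<le> x"
  shows "p F n x = (\<Sum>i<n. (n choose i) * p F (n - i) (x - zs ! i) * ord_stat F x (take i zs))
                   + ord_stat F x zs"
proof -
  let ?S = "{x+1..x+n}" and ?X = "{1..x}"
  have fin: "finite (F ?S ?X)" by (rule finite_F[OF assms(1)]) auto
  have "p F n x = card (F ?S ?X)" unfolding p_def ..
  also have "\<dots> = card (ord_set F ?S ?X zs n)
      + (\<Sum>i<n. card {f\<in>F ?S ?X. (\<forall>j<i. j < card (final_le f ?S ?X (zs!j)))
                                  \<and> \<not> i < card (final_le f ?S ?X (zs!i))})"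
    unfolding ord_set_def
    by (rule card_first_failure[OF fin, where Q="\<lambda>j f. j < card (final_le f ?S ?X (zs!j))"])
  also have "card (ord_set F ?S ?X zs n) = ord_stat F x zs"
    using assms(4) by (simp add: ord_stat_eq_card_ord_set)
  also have "(\<Sum>i<n. card {f\<in>F ?S ?X. (\<forall>j<i. j < card (final_le f ?S ?X (zs!j)))
                                  \<and> \<not> i < card (final_le f ?S ?X (zs!i))})
      = (\<Sum>i<n. (n choose i) * p F (n - i) (x - zs ! i) * ord_stat F x (take i zs))"
    by (intro sum.cong refl card_first_failure_eq[OF assms(1,2,4-6)]) simp
  finally show ?thesis by (simp only: add.commute)
qed

end
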